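(* For every standard function $f$ and every $x>0$, $$f(x)\ \ge\ f(0)\,|x-1|,$$ where $f(0):=\lim_{x\to0^+}f(x)$.
   Context: A function $f:(0,\infty)\to(0,\infty)$ is called standard if it is operator monotone, $f(1)=1$ and $f(t)=tf(t^{-1})$ for all $t>0$. (Such $f$ is increasing, so $f(0)=\lim_{x\to0^+}f(x)\ge0$ exists.) *)

theory Defs
  imports Complex_Main "Jordan_Normal_Form.Matrix"
begin

definition adj :: "nat \<Rightarrow> complex mat \<Rightarrow> complex mat" where
  "adj n U = mat n n (\<lambda>(i,j). cnj (U $$ (j,i)))"

definition unitary_mat :: "nat \<Rightarrow> complex mat \<Rightarrow> bool" where
  "unitary_mat n U \<longleftrightarrow> U \<in> carrier_mat n n \<and> U * adj n U = 1\<^sub>m n \<and> adj n U * U = 1\<^sub>m n"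

definition rdiag :: "nat \<Rightarrow> (nat \<Rightarrow> real) \<Rightarrow> complex mat" where
  "rdiag n d = mat n n (\<lambda>(i,j). if i = j then complex_of_real (d i) else 0)"

definition loewner_le :: "nat \<Rightarrow> complex mat \<Rightarrow> complex mat \<Rightarrow> bool" where
  "loewner_le n A B \<longleftrightarrow>
     (\<forall>v \<in> carrier_vec n.
        (let q = (\<Sum>i<n. \<Sum>j<n. cnj (v $ i) * (B $$ (i,j) - A $$ (i,j)) * v $ j)
         in Im q = 0 \<and> Re q \<ge> 0))"

text \<open>Operator monotonicity on (0,\<infinity>): every positive definite matrix is
  U diag(a) U* with U unitary and a > 0, and its functional calculus is
  f(U diag(a) U* ) = U diag(f \<circ> a) U*. f is operator monotone if A \<le> B implies
  f(A) \<le> f(B) for positive definite matrices of every size n.\<close>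
definition operator_monotone :: "(real \<Rightarrow> real) \<Rightarrow> bool" where
  "operator_monotone f \<longleftrightarrow>
     (\<forall>n U V a b. unitary_mat n U \<longrightarrow> unitary_mat n V \<longrightarrow>
        (\<forall>i<n. a i > 0 \<and> b i > 0) \<longrightarrow>
        loewner_le n (U * rdiag n a * adj n U) (V * rdiag n b * adj n V) \<longrightarrow>
        loewner_le n (U * rdiag n (f \<circ> a) * adj n U) (V * rdiag n (f \<circ> b) * adj n V))"

definition standard :: "(real \<Rightarrow> real) \<Rightarrow> bool" where
  "standard f \<longleftrightarrow> (\<forall>t>0. f t > 0) \<and> operator_monotone f \<and> f 1 = 1 \<and>
     (\<forall>t>0. f t = t * f (inverse t))"

end

theory Submission
  imports Defs
begin

text \<open>Operator monotonicity tested on \<open>1 \<times> 1\<close> matrices says that \<open>f\<close> is increasing on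
  \<open>(0,\<infinity>)\<close>, so \<open>f(0)\<close> is the infimum of the positive values of \<open>f\<close>: it is nonnegative and
  \<open>f(0) \<le> f(x)\<close>. The symmetry \<open>f(x) = x f(1/x)\<close> also gives \<open>x f(0) \<le> f(x)\<close>, hence
  \<open>f(x) \<ge> max 1 x \<cdot> f(0) \<ge> |x - 1| f(0)\<close>.\<close>

lemma adj_one_mat [simp]: "adj n (1\<^sub>m n) = 1\<^sub>m n"
  unfolding adj_def by (rule eq_matI) auto

lemma unitary_mat_one: "unitary_mat n (1\<^sub>m n)"
  unfolding unitary_mat_def by simp

lemma loewner_le_rdiag_1_iff:
  "loewner_le 1 (rdiag 1 a) (rdiag 1 b) \<longleftrightarrow> a 0 \<le> b 0"
proof -
  have form: "(\<Sum>i<1. \<Sum>j<1. cnj (v $ i) * (rdiag 1 b $$ (i,j) - rdiag 1 a $$ (i,j)) * v $ j)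
      = of_real ((b 0 - a 0) * (cmod (v $ 0))\<^sup>2)" for v :: "complex vec"
  proof -
    have "(\<Sum>i<1. \<Sum>j<1. cnj (v $ i) * (rdiag 1 b $$ (i,j) - rdiag 1 a $$ (i,j)) * v $ j)
        = of_real (b 0 - a 0) * (cnj (v $ 0) * v $ 0)"
      by (simp add: rdiag_def algebra_simps)
    also have "cnj (v $ 0) * v $ 0 = of_real ((cmod (v $ 0))\<^sup>2)"
      by (simp only: complex_norm_square mult.commute)
    finally show ?thesis
      by simp
  qed
  have "a 0 \<le> b 0" if "loewner_le 1 (rdiag 1 a) (rdiag 1 b)"
    using that[unfolded loewner_le_def Let_def form, rule_format, of "vec 1 (\<lambda>_. 1)"] by simp
  moreover have "loewner_le 1 (rdiag 1 a) (rdiag 1 b)" if "a 0 \<le> b 0"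
    unfolding loewner_le_def Let_def form using that by simp
  ultimately show ?thesis by blast
qed

lemma operator_monotone_imp_mono_on:
  assumes "operator_monotone f"
  shows "mono_on {0<..} f"
proof (rule mono_onI)
  fix s t :: real
  assume "s \<in> {0<..}" "t \<in> {0<..}" "s \<le> t"
  have conj: "1\<^sub>m 1 * rdiag 1 d * adj 1 (1\<^sub>m 1) = rdiag 1 d" for d
    by (simp add: rdiag_def)
  have "loewner_le 1 (rdiag 1 (\<lambda>_. s)) (rdiag 1 (\<lambda>_. t))"
    using \<open>s \<le> t\<close> by (rule loewner_le_rdiag_1_iff[THEN iffD2])
  then have "loewner_le 1 (rdiag 1 (f \<circ> (\<lambda>_. s))) (rdiag 1 (f \<circ> (\<lambda>_. t)))"
    using assms[unfolded operator_monotone_def, rule_format,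
        of 1 "1\<^sub>m 1" "1\<^sub>m 1" "\<lambda>_. s" "\<lambda>_. t", OF unitary_mat_one unitary_mat_one] \<open>s \<in> {0<..}\<close> \<open>t \<in> {0<..}\<close>
    unfolding conj by simp
  then show "f s \<le> f t"
    by (simp only: loewner_le_rdiag_1_iff o_apply)
qed

lemma mono_on_tendsto_at_right_0_Inf:
  fixes f :: "real \<Rightarrow> real"
  assumes mono: "mono_on {0<..} f" and bdd: "bdd_below (f ` {0<..})"
  shows "(f \<longlongrightarrow> Inf (f ` {0<..})) (at_right 0)"
proof (rule order_tendstoI)
  fix a assume "a < Inf (f ` {0<..})"
  show "eventually (\<lambda>y. a < f y) (at_right 0)"
  proof (rule eventually_mono[OF eventually_at_right_less[of 0]])
    fix y :: real assume "y > 0"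
    then have "Inf (f ` {0<..}) \<le> f y"
      using bdd by (auto intro: cInf_lower)
    with \<open>a < Inf (f ` {0<..})\<close> show "a < f y" by linarith
  qed
next
  fix a assume "Inf (f ` {0<..}) < a"
  then obtain t where "t > 0" "f t < a"
    using cInf_lessD[of "f ` {0<..}" a] by auto
  show "eventually (\<lambda>y. f y < a) (at_right 0)"
  proof (rule eventually_mono[OF eventually_at_right_real[OF \<open>t > 0\<close>]])
    fix y assume "y \<in> {0<..<t}"
    then have "f y \<le> f t"
      using \<open>t > 0\<close> by (intro mono_onD[OF mono]) auto
    with \<open>f t < a\<close> show "f y < a" by linarith
  qed
qed

text \<open>The symmetry law \<open>f t = t * f (inverse t)\<close> loops as a rewrite rule, so \<^const>\<open>standard\<close>
  is unfolded for \<open>blast\<close> only, never for the simplifier.\<close>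

lemma standard_nonneg:
  assumes "standard f" "t > 0"
  shows "0 \<le> f t"
proof -
  have "f t > 0"
    using assms unfolding standard_def by blast
  then show ?thesis
    by (rule less_imp_le)
qed

lemma standard_bdd_below: "standard f \<Longrightarrow> bdd_below (f ` {0<..})"
  using standard_nonneg by (intro bdd_belowI2[of _ 0]) simp

lemma standard_Lim_at_right_0:
  assumes "standard f"
  shows "Lim (at_right 0) f = Inf (f ` {0<..})"
proof (rule tendsto_Lim)
  have "bdd_below (f ` {0<..})"
    using assms by (rule standard_bdd_below)
  moreover have "mono_on {0<..} f"
    using assms operator_monotone_imp_mono_on unfolding standard_def by blast
  ultimately show "(f \<longlongrightarrow> Inf (f ` {0<..})) (at_right 0)"
    by (rule mono_on_tendsto_at_right_0_Inf[rotated])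
qed simp

theorem lemma4:
  fixes f :: "real \<Rightarrow> real" and x :: real
  assumes "standard f" and "x > 0"
  shows "f x \<ge> Lim (at_right 0) f * \<bar>x - 1\<bar>"
proof -
  define L where "L = Inf (f ` {0<..})"
  have L_le: "L \<le> f t" if "t > 0" for t
    unfolding L_def using standard_bdd_below[OF assms(1)] that by (intro cInf_lower) auto
  have "0 \<le> L"
    unfolding L_def using standard_nonneg[OF assms(1)] by (intro cInf_greatest) auto
  have "f x = x * f (inverse x)"
    using assms unfolding standard_def by blast
  then have "x * L \<le> f x"
    using L_le assms(2) by (simp add: mult_left_mono)
  moreover have "L \<le> f x"
    using L_le assms(2) .
  ultimately have "max 1 x * L \<le> f x"
    by (simp add: max_def)
  moreover have "\<bar>x - 1\<bar> * L \<le> max 1 x * L"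
    using \<open>0 \<le> L\<close> assms(2) by (intro mult_right_mono) auto
  ultimately show ?thesis
    unfolding standard_Lim_at_right_0[OF assms(1)] L_def by (simp add: mult.commute)
qed

end
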